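(* Let $l\ge3$ and consider the edge reinforced random walk $(I_n)$ on $\mathcal G_l$ with weight function $W:\mathbb N\to(0,\infty)$ and arbitrary initial edge weights $X_0^e\in\mathbb N$. For each $i\in\{0,\ldots,l-1\}$ the process $\kappa_n^i:=\sum_{k=0}^{n-1}\frac{1_{\{I_k=i,\,I_{k+1}=i+1\}}}{W(X_k^{e_i})}-\sum_{k=0}^{n-1}\frac{1_{\{I_k=i,\,I_{k+1}=i-1\}}}{W(X_k^{e_{i-1}})}$, $n\ge0$, is an $(\mathcal F_n)$-martingale. Moreover, if $l$ is even, then $\kappa_n:=\sum_{i=0}^{l-1}(-1)^i\kappa_n^i+\sum_{i=0}^{l-1}(-1)^iW^*(X_0^{e_i})$ satisfies $\kappa_n=\sum_{i=0}^{l-1}(-1)^iW^*(X_n^{e_i})$ for all $n$, it is a martingale, and if in addition $\sum_{k\in\mathbb N}\frac1{W(k)}<\infty$ then $\kappa_n$ converges almost surely to a finite limit $\kappa_\infty$, with $\kappa_\infty=0$ almost surely on the event that all edges of $\mathcal G_l$ are traversed infinitely often.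
   Context: $\mathbb N=\{0,1,2,\ldots\}$. For $l\ge 3$, the cycle $\mathcal G_l$ has vertices $\{0,\ldots,l-1\}$ and edges $e_i=\{i,i+1\}$, addition modulo $l$. ERRW on $\mathcal G_l$: given $W:\mathbb N\to(0,\infty)$, initial edge weights $X_0^e\in\mathbb N$ and $I_0=v_0$, with natural filtration $(\mathcal F_n)$, $\mathbb P(I_{n+1}=v'\mid\mathcal F_n)1_{\{I_n=v\}}=\frac{W(X_n^{\{v,v'\}})}{\sum_{w\sim v}W(X_n^{\{v,w\}})}1_{\{I_n=v\sim v'\}}$, where $X_n^e=X_0^e+\sum_{k=0}^{n-1}1_{\{\{I_k,I_{k+1}\}=e\}}$. Define $W^*(n):=\sum_{k=0}^{n-1}\frac1{W(k)}$ for $n\in\mathbb N$, with $W^*(0)=0$. *)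

theory Defs
  imports "HOL-Probability.Probability"
begin

definition cyc_edge :: "nat \<Rightarrow> nat \<Rightarrow> nat set" where
  "cyc_edge l i = {i, Suc i mod l}"

definition cyc_adj :: "nat \<Rightarrow> nat \<Rightarrow> nat \<Rightarrow> bool" where
  "cyc_adj l v w \<longleftrightarrow> v < l \<and> w < l \<and> (w = Suc v mod l \<or> v = Suc w mod l)"

definition edge_wt :: "(nat set \<Rightarrow> nat) \<Rightarrow> (nat \<Rightarrow> 'a \<Rightarrow> nat) \<Rightarrow> nat \<Rightarrow> nat set \<Rightarrow> 'a \<Rightarrow> nat" where
  "edge_wt X0 I n e x = X0 e + card {k. k < n \<and> {I k x, I (Suc k) x} = e}"

definition Wstar :: "(nat \<Rightarrow> real) \<Rightarrow> nat \<Rightarrow> real" where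
  "Wstar W n = (\<Sum>k<n. 1 / W k)"

definition nat_filt :: "'a measure \<Rightarrow> (nat \<Rightarrow> 'a \<Rightarrow> nat) \<Rightarrow> nat \<Rightarrow> 'a measure" where
  "nat_filt M I n = sigma (space M) {I k -` A \<inter> space M | k A. k \<le> n}"

definition martingale :: "'a measure \<Rightarrow> (nat \<Rightarrow> 'a measure) \<Rightarrow> (nat \<Rightarrow> 'a \<Rightarrow> real) \<Rightarrow> bool" where
  "martingale M F Y \<longleftrightarrow>
     (\<forall>n. Y n \<in> borel_measurable (F n)) \<and>
     (\<forall>n. integrable M (Y n)) \<and>
     (\<forall>n. AE x in M. real_cond_exp M (F n) (Y (Suc n)) x = Y n x)"

definition is_errw :: "'a measure \<Rightarrow> nat \<Rightarrow> (nat \<Rightarrow> real) \<Rightarrow> (nat set \<Rightarrow> nat) \<Rightarrow> nat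
      \<Rightarrow> (nat \<Rightarrow> 'a \<Rightarrow> nat) \<Rightarrow> bool" where
  "is_errw M l W X0 v0 I \<longleftrightarrow>
     prob_space M \<and>
     (\<forall>n. I n \<in> measurable M (count_space UNIV)) \<and>
     (\<forall>n. \<forall>x\<in>space M. I n x < l) \<and>
     (\<forall>x\<in>space M. I 0 x = v0) \<and>
     (\<forall>n v v'. AE x in M.
        (if I n x = v then 1 else 0) *
          real_cond_exp M (nat_filt M I n) (\<lambda>y. if I (Suc n) y = v' then 1 else 0) x
        = (if I n x = v \<and> cyc_adj l v v' then
             W (edge_wt X0 I n {v, v'} x) /
               (\<Sum>w\<in>{w. cyc_adj l v w}. W (edge_wt X0 I n {v, w} x))
           else 0))"

definition kappa_i :: "nat \<Rightarrow> (nat \<Rightarrow> real) \<Rightarrow> (nat set \<Rightarrow> nat) \<Rightarrow> (nat \<Rightarrow> 'a \<Rightarrow> nat)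
      \<Rightarrow> nat \<Rightarrow> nat \<Rightarrow> 'a \<Rightarrow> real" where
  "kappa_i l W X0 I i n x =
     (\<Sum>k<n. (if I k x = i \<and> I (Suc k) x = Suc i mod l
               then 1 / W (edge_wt X0 I k (cyc_edge l i) x) else 0))
   - (\<Sum>k<n. (if I k x = i \<and> I (Suc k) x = (i + l - 1) mod l
               then 1 / W (edge_wt X0 I k (cyc_edge l ((i + l - 1) mod l)) x) else 0))"

definition kappa :: "nat \<Rightarrow> (nat \<Rightarrow> real) \<Rightarrow> (nat set \<Rightarrow> nat) \<Rightarrow> (nat \<Rightarrow> 'a \<Rightarrow> nat)
      \<Rightarrow> nat \<Rightarrow> 'a \<Rightarrow> real" where
  "kappa l W X0 I n x =
     (\<Sum>i<l. (-1) ^ i * kappa_i l W X0 I i n x) + (\<Sum>i<l. (-1) ^ i * Wstar W (X0 (cyc_edge l i)))"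

end

theory Submission
  imports Defs
begin

(*
  At vertex i the walk moves to i + 1 or to i - 1 with probabilities proportional to the
  current weights W(X^{e_i}) and W(X^{e_{i-1}}) of the two incident edges.  Weighting each
  move by the inverse of that weight, as kappa^i does, gives both moves the same conditional
  expectation, so kappa^i has centred increments.

  A crossing of e_j adds 1/W(X^{e_j}) to W^*(X^{e_j}), and the same amount, with the sign
  (-1)^v of the vertex v it leaves, to kappa.  For even l that sign is (-1)^j in both
  directions, which gives the pathwise identity for kappa.  If sum_k 1/W(k) < oo, every
  W^*(X_n^e) is increasing and bounded, so kappa_n converges; if every edge is crossed
  infinitely often, all these limits equal sum_k 1/W(k) and the alternating sum vanishes.
*)

lemma pred_mod_eq_if:
  assumes "i < (l :: nat)"
  shows "(i + l - 1) mod l = (if i = 0 then l - 1 else i - 1)"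
proof (cases i)
  case (Suc j)
  then have "i + l - 1 = j + l" by simp
  then show ?thesis
    using Suc assms by simp
qed (use assms in simp)

lemma Suc_pred_mod: "i < l \<Longrightarrow> Suc ((i + l - 1) mod l) mod l = i"
  using pred_mod_eq_if[of i l] by (auto simp: mod_Suc)

lemma pred_Suc_mod: "i < l \<Longrightarrow> (Suc i mod l + l - 1) mod l = i"
  using pred_mod_eq_if[of "Suc i mod l" l] by (auto simp: mod_Suc)

lemma Suc_mod_neq_pred_mod: "3 \<le> l \<Longrightarrow> i < l \<Longrightarrow> Suc i mod l \<noteq> (i + l - 1) mod l"
  using pred_mod_eq_if[of i l] by (auto simp: mod_Suc)

lemma cyc_adj_Suc_mod: "i < l \<Longrightarrow> cyc_adj l i (Suc i mod l)"
  by (simp add: cyc_adj_def)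

lemma cyc_adj_pred_mod: "i < l \<Longrightarrow> cyc_adj l i ((i + l - 1) mod l)"
  unfolding cyc_adj_def using Suc_pred_mod[of i l] by auto

lemma cyc_edge_pred_mod: "i < l \<Longrightarrow> cyc_edge l ((i + l - 1) mod l) = {i, (i + l - 1) mod l}"
  unfolding cyc_edge_def using Suc_pred_mod[of i l] by auto

lemma inj_on_cyc_edge: "3 \<le> l \<Longrightarrow> inj_on (cyc_edge l) {..<l}"
  by (auto simp: inj_on_def cyc_edge_def doubleton_eq_iff mod_Suc split: if_splits)

lemma neg_one_power_mod_even: "even l \<Longrightarrow> (-1 :: 'a :: ring_1) ^ (k mod l) = (-1) ^ k"
  by (simp add: minus_one_power_iff dvd_mod_iff)

lemma sum_neg_one_power_even:
  assumes "even l"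
  shows "(\<Sum>i<l. (-1 :: 'a :: ring_1) ^ i) = 0"
proof -
  obtain m where "l = 2 * m"
    using assms by blast
  moreover have "(\<Sum>i<2 * m. (-1 :: 'a) ^ i) = 0"
    by (induction m) simp_all
  ultimately show ?thesis by simp
qed

section \<open>Edge weights and \<open>W\<^sup>*\<close>\<close>

lemma edge_wt_0 [simp]: "edge_wt X0 I 0 e x = X0 e"
  by (simp add: edge_wt_def)

lemma edge_wt_Suc:
  "edge_wt X0 I (Suc n) e x = edge_wt X0 I n e x + (if {I n x, I (Suc n) x} = e then 1 else 0)"
proof -
  have "{k. k < Suc n \<and> {I k x, I (Suc k) x} = e}
      = {k. k < n \<and> {I k x, I (Suc k) x} = e} \<union> (if {I n x, I (Suc n) x} = e then {n} else {})"
    by (auto simp: less_Suc_eq)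
  then show ?thesis
    by (simp add: edge_wt_def)
qed

lemma edge_wt_mono: "n \<le> n' \<Longrightarrow> edge_wt X0 I n e x \<le> edge_wt X0 I n' e x"
  unfolding edge_wt_def by (auto intro!: card_mono)

lemma edge_wt_le: "edge_wt X0 I n e x \<le> X0 e + n"
proof -
  have "card {k. k < n \<and> {I k x, I (Suc k) x} = e} \<le> card {..<n}"
    by (rule card_mono) auto
  then show ?thesis
    by (simp add: edge_wt_def)
qed

lemma edge_wt_prefix_cong:
  "(\<And>k. k \<le> n \<Longrightarrow> I k x = I k y) \<Longrightarrow> edge_wt X0 I n e x = edge_wt X0 I n e y"
  unfolding edge_wt_def by (rule arg_cong[where f = "\<lambda>A. X0 e + card A"]) (auto simp: Suc_le_eq)

lemma filterlim_edge_wt_at_top: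
  assumes "infinite {k. {I k x, I (Suc k) x} = e}"
  shows "filterlim (\<lambda>n. edge_wt X0 I n e x) at_top sequentially"
  unfolding filterlim_at_top eventually_sequentially
proof
  fix z
  obtain B where B: "finite B" "card B = z" "B \<subseteq> {k. {I k x, I (Suc k) x} = e}"
    using infinite_arbitrarily_large[OF assms] by blast
  have "z \<le> edge_wt X0 I n e x" if "Suc (Max B) \<le> n" for n
  proof -
    have "B \<subseteq> {k. k < n \<and> {I k x, I (Suc k) x} = e}"
      using B that by (auto dest: Max_ge[OF B(1)])
    then have "card B \<le> card {k. k < n \<and> {I k x, I (Suc k) x} = e}"
      by (intro card_mono) auto
    then show ?thesis
      using B(2) by (simp add: edge_wt_def)
  qed
  then show "\<exists>N. \<forall>n\<ge>N. z \<le> edge_wt X0 I n e x"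
    by blast
qed

lemma Wstar_Suc: "Wstar W (Suc n) = Wstar W n + 1 / W n"
  by (simp add: Wstar_def)

lemma Wstar_mono: "(\<And>k. 0 < W k) \<Longrightarrow> m \<le> n \<Longrightarrow> Wstar W m \<le> Wstar W n"
  unfolding Wstar_def by (rule sum_mono2) (auto simp: less_imp_le)

lemma inverse_le_Wstar: "(\<And>k. 0 < W k) \<Longrightarrow> m < n \<Longrightarrow> 1 / W m \<le> Wstar W n"
  unfolding Wstar_def by (rule member_le_sum[where f = "\<lambda>k. 1 / W k"]) (auto simp: less_imp_le)

lemma Wstar_nonneg: "(\<And>k. 0 < W k) \<Longrightarrow> 0 \<le> Wstar W n"
  unfolding Wstar_def by (rule sum_nonneg) (simp add: less_imp_le)

lemma inverse_W_edge_wt_le_Wstar: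
  "(\<And>k. 0 < W k) \<Longrightarrow> 1 / W (edge_wt X0 I n e x) \<le> Wstar W (Suc (X0 e + n))"
  by (rule inverse_le_Wstar) (simp_all add: le_imp_less_Suc edge_wt_le)

lemma Wstar_le_suminf:
  "(\<And>k. 0 < W k) \<Longrightarrow> summable (\<lambda>k. 1 / W k) \<Longrightarrow> Wstar W n \<le> (\<Sum>k. 1 / W k)"
  unfolding Wstar_def by (rule sum_le_suminf) (auto simp: less_imp_le)

lemma Wstar_LIMSEQ_suminf: "summable (\<lambda>k. 1 / W k) \<Longrightarrow> Wstar W \<longlonglongrightarrow> (\<Sum>k. 1 / W k)"
  unfolding Wstar_def[abs_def] by (rule summable_LIMSEQ)

lemma Wstar_edge_wt_Suc:
  "Wstar W (edge_wt X0 I (Suc n) e x)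
     = Wstar W (edge_wt X0 I n e x)
       + (if {I n x, I (Suc n) x} = e then 1 / W (edge_wt X0 I n e x) else 0)"
  by (simp add: edge_wt_Suc Wstar_Suc)

section \<open>Pathwise identities for \<open>\<kappa>\<close>\<close>

definition weighted_crossing :: "(nat \<Rightarrow> real) \<Rightarrow> (nat set \<Rightarrow> nat) \<Rightarrow> (nat \<Rightarrow> 'a \<Rightarrow> nat)
      \<Rightarrow> nat \<Rightarrow> nat \<Rightarrow> nat \<Rightarrow> 'a \<Rightarrow> real" where
  "weighted_crossing W X0 I v v' n x =
     (if I n x = v \<and> I (Suc n) x = v' then 1 / W (edge_wt X0 I n {v, v'} x) else 0)"

definition alt_Wstar :: "nat \<Rightarrow> (nat \<Rightarrow> real) \<Rightarrow> (nat set \<Rightarrow> nat) \<Rightarrow> (nat \<Rightarrow> 'a \<Rightarrow> nat)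
      \<Rightarrow> nat \<Rightarrow> 'a \<Rightarrow> real" where
  "alt_Wstar l W X0 I n x = (\<Sum>i<l. (-1) ^ i * Wstar W (edge_wt X0 I n (cyc_edge l i) x))"

lemma weighted_crossing_nonneg: "(\<And>k. 0 < W k) \<Longrightarrow> 0 \<le> weighted_crossing W X0 I v v' n x"
  by (simp add: weighted_crossing_def less_imp_le)

lemma weighted_crossing_le_Wstar:
  "(\<And>k. 0 < W k) \<Longrightarrow> weighted_crossing W X0 I v v' n x \<le> Wstar W (Suc (X0 {v, v'} + n))"
  by (simp add: weighted_crossing_def inverse_W_edge_wt_le_Wstar Wstar_nonneg)

lemma weighted_crossing_prefix_cong:
  "(\<And>k. k \<le> Suc n \<Longrightarrow> I k x = I k y)
     \<Longrightarrow> weighted_crossing W X0 I v v' n x = weighted_crossing W X0 I v v' n y"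
  unfolding weighted_crossing_def using edge_wt_prefix_cong[of n I x y X0] by simp

lemma kappa_i_0 [simp]: "kappa_i l W X0 I i 0 x = 0"
  by (simp add: kappa_i_def)

lemma kappa_i_Suc:
  assumes "i < l"
  shows "kappa_i l W X0 I i (Suc n) x = kappa_i l W X0 I i n x
    + weighted_crossing W X0 I i (Suc i mod l) n x
    - weighted_crossing W X0 I i ((i + l - 1) mod l) n x"
  using cyc_edge_pred_mod[OF assms]
  by (simp add: kappa_i_def weighted_crossing_def cyc_edge_def)

lemma kappa_i_prefix_cong:
  "(\<And>k. k \<le> n \<Longrightarrow> I k x = I k y) \<Longrightarrow> kappa_i l W X0 I i n x = kappa_i l W X0 I i n y"
  unfolding kappa_i_def
  by (intro arg_cong2[where f = "(-)"] sum.cong refl)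
     (auto simp: Suc_le_eq intro!: arg_cong[where f = W] edge_wt_prefix_cong)

lemma kappa_Suc:
  assumes "I n x < l"
  shows "kappa l W X0 I (Suc n) x = kappa l W X0 I n x + (-1) ^ I n x *
    (weighted_crossing W X0 I (I n x) (Suc (I n x) mod l) n x
     - weighted_crossing W X0 I (I n x) ((I n x + l - 1) mod l) n x)"
proof -
  have "(-1) ^ i * kappa_i l W X0 I i (Suc n) x = (-1) ^ i * kappa_i l W X0 I i n x
      + (if i = I n x then (-1) ^ I n x * (weighted_crossing W X0 I (I n x) (Suc (I n x) mod l) n x
           - weighted_crossing W X0 I (I n x) ((I n x + l - 1) mod l) n x) else 0)"
    if "i < l" for i
    using that by (auto simp: kappa_i_Suc weighted_crossing_def algebra_simps)
  then show ?thesis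
    using assms by (simp add: kappa_def sum.distrib)
qed

lemma alt_Wstar_Suc:
  assumes "3 \<le> l" "j < l" and step: "{I n x, I (Suc n) x} = cyc_edge l j"
  shows "alt_Wstar l W X0 I (Suc n) x
    = alt_Wstar l W X0 I n x + (-1) ^ j / W (edge_wt X0 I n (cyc_edge l j) x)"
proof -
  have "(-1) ^ i * Wstar W (edge_wt X0 I (Suc n) (cyc_edge l i) x)
      = (-1) ^ i * Wstar W (edge_wt X0 I n (cyc_edge l i) x)
        + (if i = j then (-1) ^ j / W (edge_wt X0 I n (cyc_edge l j) x) else 0)"
    if "i < l" for i
    using inj_on_cyc_edge[OF assms(1)] assms(2) that
    by (auto simp: Wstar_edge_wt_Suc step algebra_simps dest: inj_onD)
  then show ?thesis
    using assms(2) by (simp add: alt_Wstar_def sum.distrib)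
qed

lemma kappa_eq_alt_Wstar_pathwise:
  assumes l: "3 \<le> l" "even l" and adj: "\<And>k. cyc_adj l (I k x) (I (Suc k) x)"
  shows "kappa l W X0 I n x = alt_Wstar l W X0 I n x"
proof (induction n)
  case 0
  then show ?case
    by (simp add: kappa_def alt_Wstar_def)
next
  case (Suc n)
  define a where "a = I n x"
  define b where "b = I (Suc n) x"
  have "a < l" "b < l" and "b = Suc a mod l \<or> a = Suc b mod l"
    using adj[of n] by (auto simp: cyc_adj_def a_def b_def)
  then consider (forward) "b = Suc a mod l" | (backward) "a = Suc b mod l" "b \<noteq> Suc a mod l"
    by blast
  then show ?case
  proof cases
    case forward
    have step: "{I n x, I (Suc n) x} = cyc_edge l a"
      using forward by (simp add: a_def b_def cyc_edge_def)
    have "b \<noteq> (a + l - 1) mod l"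
      using Suc_mod_neq_pred_mod[OF l(1) \<open>a < l\<close>] forward by simp
    then have "kappa l W X0 I (Suc n) x
        = kappa l W X0 I n x + (-1) ^ a / W (edge_wt X0 I n (cyc_edge l a) x)"
      using kappa_Suc[of I n x l] \<open>a < l\<close> forward
      by (simp add: a_def b_def weighted_crossing_def cyc_edge_def)
    then show ?thesis
      using Suc.IH alt_Wstar_Suc[where I = I and n = n and x = x, OF l(1) \<open>a < l\<close> step] by simp
  next
    case backward
    have step: "{I n x, I (Suc n) x} = cyc_edge l b"
      using backward by (auto simp: a_def b_def cyc_edge_def)
    have "(a + l - 1) mod l = b"
      using pred_Suc_mod[OF \<open>b < l\<close>] backward(1) by simp
    moreover have "(-1 :: real) ^ a = - ((-1) ^ b)"
      using neg_one_power_mod_even[OF l(2), of "Suc b"] backward(1) by simp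
    ultimately have "kappa l W X0 I (Suc n) x
        = kappa l W X0 I n x + (-1) ^ b / W (edge_wt X0 I n (cyc_edge l b) x)"
      using kappa_Suc[of I n x l] \<open>a < l\<close> backward
      by (simp add: a_def b_def weighted_crossing_def cyc_edge_def insert_commute)
    then show ?thesis
      using Suc.IH alt_Wstar_Suc[where I = I and n = n and x = x, OF l(1) \<open>b < l\<close> step] by simp
  qed
qed

lemma convergent_alt_Wstar:
  assumes "\<And>k. 0 < W k" "summable (\<lambda>k. 1 / W k)"
  shows "convergent (\<lambda>n. alt_Wstar l W X0 I n x)"
proof -
  have "convergent (\<lambda>n. Wstar W (edge_wt X0 I n e x))" for e
  proof -
    have "incseq (\<lambda>n. Wstar W (edge_wt X0 I n e x))"
      unfolding incseq_def by (intro allI impI Wstar_mono[OF assms(1)] edge_wt_mono)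
    moreover have "\<forall>n. Wstar W (edge_wt X0 I n e x) \<le> (\<Sum>k. 1 / W k)"
      using Wstar_le_suminf[OF assms] by blast
    ultimately show ?thesis
      unfolding convergent_def by (blast elim: incseq_convergent)
  qed
  then show ?thesis
    unfolding alt_Wstar_def by (intro convergent_sum convergent_mult convergent_const)
qed

lemma alt_Wstar_LIMSEQ_0:
  assumes "summable (\<lambda>k. 1 / W k)" "even l"
    and inf: "\<forall>i<l. infinite {k. {I k x, I (Suc k) x} = cyc_edge l i}"
  shows "(\<lambda>n. alt_Wstar l W X0 I n x) \<longlonglongrightarrow> 0"
proof -
  have "(\<lambda>n. alt_Wstar l W X0 I n x) \<longlonglongrightarrow> (\<Sum>i<l. (-1) ^ i * (\<Sum>k. 1 / W k))"
    unfolding alt_Wstar_def using inf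
    by (intro tendsto_sum tendsto_mult_left filterlim_compose[OF Wstar_LIMSEQ_suminf[OF assms(1)]]
        filterlim_edge_wt_at_top) auto
  also have "(\<Sum>i<l. (-1) ^ i * (\<Sum>k. 1 / W k)) = 0"
    using sum_neg_one_power_even[OF assms(2), where 'a = real]
    by (simp add: sum_distrib_right[symmetric])
  finally show ?thesis .
qed

section \<open>Martingales for a natural filtration\<close>

lemma space_nat_filt [simp]: "space (nat_filt M I n) = space M"
  by (simp add: nat_filt_def space_measure_of_conv)

lemma vimage_in_nat_filt: "k \<le> n \<Longrightarrow> I k -` A \<inter> space M \<in> sets (nat_filt M I n)"
  unfolding nat_filt_def by (rule in_measure_of) auto

lemma subalgebra_nat_filt:
  assumes "\<And>k. I k \<in> measurable M (count_space UNIV)"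
  shows "subalgebra M (nat_filt M I n)"
proof -
  have "sigma_sets (space M) {I k -` A \<inter> space M | k A. k \<le> n} \<subseteq> sets M"
    by (rule sets.sigma_sets_subset) (auto intro: measurable_sets[OF assms])
  then show ?thesis
    by (auto simp: subalgebra_def nat_filt_def sets_measure_of_conv)
qed

lemma (in prob_space) sigma_finite_subalgebra_nat_filt:
  assumes "\<And>k. I k \<in> measurable M (count_space UNIV)"
  shows "sigma_finite_subalgebra M (nat_filt M I n)"
proof -
  interpret finite_measure_subalgebra M "nat_filt M I n"
    by unfold_locales (rule subalgebra_nat_filt[OF assms])
  show ?thesis by unfold_locales
qed

lemma borel_measurable_nat_filt_prefix:
  fixes g :: "'a \<Rightarrow> 'b::topological_space"
  assumes prefix: "\<And>x y. x \<in> space M \<Longrightarrow> y \<in> space M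
      \<Longrightarrow> (\<And>k. k \<le> n \<Longrightarrow> I k x = I k y) \<Longrightarrow> g x = g y"
  shows "g \<in> borel_measurable (nat_filt M I n)"
proof -
  define F where "F = nat_filt M I n"
  \<comment> \<open>\<open>g\<close> factors through the countable-valued prefix \<open>(I 0, \<dots>, I n)\<close>.\<close>
  define path where "path x = map (\<lambda>k. I k x) [0..<Suc n]" for x
  have length_path: "length (path x) = Suc n" for x
    by (simp add: path_def)
  have path_nth: "path x ! k = I k x" if "k \<le> n" for x k
    unfolding path_def using that by (subst nth_map_upt) auto
  have path_meas: "path \<in> measurable F (count_space UNIV)"
    unfolding measurable_count_space_eq2_countable
  proof safe
    fix xs :: "nat list"
    show "path -` {xs} \<inter> space F \<in> sets F"
    proof (cases "length xs = Suc n")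
      case True
      have "path x = xs \<longleftrightarrow> (\<forall>k\<le>n. I k x = xs ! k)" for x
        unfolding list_eq_iff_nth_eq length_path True less_Suc_eq_le using path_nth by auto
      then have "path -` {xs} \<inter> space F = (\<Inter>k\<in>{..n}. I k -` {xs ! k} \<inter> space M)"
        by (auto simp: F_def)
      also have "\<dots> \<in> sets F"
        by (rule sets.finite_INT) (auto simp: F_def intro: vimage_in_nat_filt)
      finally show ?thesis .
    next
      case False
      then have "path -` {xs} \<inter> space F = {}"
        using length_path by auto
      then show ?thesis by simp
    qed
  qed auto
  define h where "h xs = g (SOME y. y \<in> space M \<and> path y = xs)" for xs
  have h_meas: "(\<lambda>x. h (path x)) \<in> borel_measurable F"
    by (rule measurable_compose_countable[where f = "\<lambda>xs x. h xs", OF _ path_meas]) simp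
  have h_eq: "g x = h (path x)" if x: "x \<in> space F" for x
  proof -
    let ?y = "SOME y. y \<in> space M \<and> path y = path x"
    have x_M: "x \<in> space M"
      using x by (simp add: F_def)
    have y: "?y \<in> space M \<and> path ?y = path x"
      by (rule someI[of _ x]) (simp add: x_M)
    have "I k x = I k ?y" if "k \<le> n" for k
    proof -
      have "I k x = path x ! k"
        by (rule path_nth[OF that, symmetric])
      also have "\<dots> = path ?y ! k"
        using y by simp
      also have "\<dots> = I k ?y"
        by (rule path_nth[OF that])
      finally show ?thesis .
    qed
    then have "g x = g ?y"
      by (rule prefix[OF x_M conjunct1[OF y]])
    then show ?thesis
      by (simp add: h_def)
  qed
  have "g \<in> borel_measurable F"
    using measurable_cong[of F g "\<lambda>x. h (path x)" borel] h_eq h_meas by blast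
  then show ?thesis
    by (simp add: F_def)
qed

lemma martingale_of_increments:
  assumes sub: "\<And>n. sigma_finite_subalgebra M (F n)"
    and meas: "\<And>n. Y n \<in> borel_measurable (F n)"
    and int_0: "integrable M (Y 0)"
    and int_incr: "\<And>n. integrable M (\<lambda>x. Y (Suc n) x - Y n x)"
    and incr: "\<And>n. AE x in M. real_cond_exp M (F n) (\<lambda>x. Y (Suc n) x - Y n x) x = 0"
  shows "martingale M F Y"
proof -
  have int: "integrable M (Y n)" for n
  proof (induction n)
    case (Suc n)
    then have "integrable M (\<lambda>x. (Y (Suc n) x - Y n x) + Y n x)"
      using int_incr by (intro Bochner_Integration.integrable_add)
    then show ?case by simp
  qed (fact int_0)
  have "AE x in M. real_cond_exp M (F n) (Y (Suc n)) x = Y n x" for n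
  proof -
    interpret sigma_finite_subalgebra M "F n" by (fact sub)
    have "AE x in M. real_cond_exp M (F n) (\<lambda>x. (Y (Suc n) x - Y n x) + Y n x) x
        = real_cond_exp M (F n) (\<lambda>x. Y (Suc n) x - Y n x) x + real_cond_exp M (F n) (Y n) x"
      by (rule real_cond_exp_add[OF int_incr int])
    moreover have "AE x in M. real_cond_exp M (F n) (Y n) x = Y n x"
      by (rule real_cond_exp_F_meas[OF int meas])
    ultimately show ?thesis
      using incr[of n] by eventually_elim simp
  qed
  then show ?thesis
    unfolding martingale_def using meas int by blast
qed

lemma (in prob_space) martingale_lincomb:
  assumes sub: "\<And>n. subalgebra M (F n)"
    and fin: "finite A"
    and mart: "\<And>i. i \<in> A \<Longrightarrow> martingale M F (Y i)"
  shows "martingale M F (\<lambda>n x. (\<Sum>i\<in>A. c i * Y i n x) + C)"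
proof -
  have meas: "i \<in> A \<Longrightarrow> Y i n \<in> borel_measurable (F n)"
    and int: "i \<in> A \<Longrightarrow> integrable M (Y i n)"
    and cond: "i \<in> A \<Longrightarrow> AE x in M. real_cond_exp M (F n) (Y i (Suc n)) x = Y i n x" for i n
    using mart unfolding martingale_def by blast+
  have "AE x in M. real_cond_exp M (F n) (\<lambda>x. (\<Sum>i\<in>A. c i * Y i (Suc n) x) + C) x
          = (\<Sum>i\<in>A. c i * Y i n x) + C" for n
  proof -
    interpret finite_measure_subalgebra M "F n"
      by unfold_locales (fact sub)
    \<comment> \<open>\<open>real_cond_exp_sum\<close> needs every summand integrable, so extend by \<open>0\<close> outside \<open>A\<close>.\<close>
    define Z where "Z i = (if i \<in> A then (\<lambda>x. c i * Y i (Suc n) x) else (\<lambda>x. 0))" for i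
    have int_Z: "integrable M (Z i)" for i
      using int by (simp add: Z_def)
    have sum_Z: "(\<Sum>i\<in>A. c i * Y i (Suc n) x) = (\<Sum>i\<in>A. Z i x)" for x
      by (simp add: Z_def)
    have "integrable M (\<lambda>x. \<Sum>i\<in>A. Z i x)"
      using int_Z by (rule Bochner_Integration.integrable_sum)
    then have "AE x in M. real_cond_exp M (F n) (\<lambda>x. (\<Sum>i\<in>A. Z i x) + C) x
        = real_cond_exp M (F n) (\<lambda>x. \<Sum>i\<in>A. Z i x) x + real_cond_exp M (F n) (\<lambda>x. C) x"
      by (rule real_cond_exp_add) simp
    moreover have "AE x in M. real_cond_exp M (F n) (\<lambda>x. C) x = C"
      by (rule real_cond_exp_F_meas) auto
    moreover have "AE x in M. real_cond_exp M (F n) (\<lambda>x. \<Sum>i\<in>A. Z i x) x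
        = (\<Sum>i\<in>A. real_cond_exp M (F n) (Z i) x)"
      by (rule real_cond_exp_sum[OF int_Z])
    moreover have "AE x in M. \<forall>i\<in>A. real_cond_exp M (F n) (Z i) x = c i * Y i n x"
    proof (rule eventually_ball_finite[OF fin], intro ballI)
      fix i assume "i \<in> A"
      then have Z_i: "Z i = (\<lambda>x. c i * Y i (Suc n) x)"
        by (simp add: Z_def)
      show "AE x in M. real_cond_exp M (F n) (Z i) x = c i * Y i n x"
        unfolding Z_i
        using real_cond_exp_cmult[where c = "c i", OF int[OF \<open>i \<in> A\<close>, of "Suc n"]]
          cond[OF \<open>i \<in> A\<close>, of n]
        by eventually_elim simp
    qed
    ultimately show ?thesis
      unfolding sum_Z by eventually_elim simp
  qed
  moreover have "(\<lambda>x. (\<Sum>i\<in>A. c i * Y i n x) + C) \<in> borel_measurable (F n)" for n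
    using meas by (intro borel_measurable_add borel_measurable_sum borel_measurable_times) auto
  moreover have "integrable M (\<lambda>x. (\<Sum>i\<in>A. c i * Y i n x) + C)" for n
    using int
    by (intro Bochner_Integration.integrable_add integrable_sum integrable_mult_right) auto
  ultimately show ?thesis
    unfolding martingale_def by blast
qed

lemma (in sigma_finite_subalgebra) AE_eq_0_if_real_cond_exp_eq_0:
  assumes int: "integrable M f" and nonneg: "AE x in M. 0 \<le> f x"
    and cond: "AE x in M. real_cond_exp M F f x = 0"
  shows "AE x in M. f x = 0"
proof -
  have "(\<integral>x. f x \<partial>M) = (\<integral>x. real_cond_exp M F f x \<partial>M)"
    by (rule real_cond_exp_int(2)[OF int, symmetric])
  also have "\<dots> = 0"
    using cond by (simp add: integral_eq_zero_AE)
  finally show ?thesis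
    using integral_nonneg_eq_0_iff_AE[OF int nonneg] by simp
qed

section \<open>Edge reinforced random walk on the cycle\<close>

lemma errw_prob_space: "is_errw M l W X0 v0 I \<Longrightarrow> prob_space M"
  by (simp add: is_errw_def)

lemma errw_measurable: "is_errw M l W X0 v0 I \<Longrightarrow> I n \<in> measurable M (count_space UNIV)"
  by (simp add: is_errw_def)

lemma errw_cond_exp_step:
  assumes errw: "is_errw M l W X0 v0 I"
    and f_meas: "f \<in> borel_measurable (nat_filt M I n)"
    and f_bdd: "\<And>x. x \<in> space M \<Longrightarrow> \<bar>f x\<bar> \<le> B"
    and f_supp: "\<And>x. x \<in> space M \<Longrightarrow> I n x \<noteq> v \<Longrightarrow> f x = 0"
  shows "AE x in M.
      real_cond_exp M (nat_filt M I n) (\<lambda>y. f y * (if I (Suc n) y = v' then 1 else 0)) x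
    = f x * (if cyc_adj l v v' then W (edge_wt X0 I n {v, v'} x)
               / (\<Sum>w\<in>{w. cyc_adj l v w}. W (edge_wt X0 I n {v, w} x)) else 0)"
proof -
  interpret prob_space M
    using errw by (rule errw_prob_space)
  note I_meas = errw_measurable[OF errw]
  interpret sigma_finite_subalgebra M "nat_filt M I n"
    by (rule sigma_finite_subalgebra_nat_filt[OF I_meas])
  define g where "g = (\<lambda>y. if I (Suc n) y = v' then 1 else 0 :: real)"
  have g_meas: "g \<in> borel_measurable M"
    unfolding g_def by (rule measurable_compose[OF I_meas]) simp
  have "(\<lambda>y. f y * g y) \<in> borel_measurable M"
    using measurable_from_subalg[OF subalg f_meas] g_meas by simp
  moreover have "\<bar>f x * g x\<bar> \<le> B" if "x \<in> space M" for x
    using f_bdd[OF that] abs_ge_zero[of "f x"] by (auto simp: g_def)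
  ultimately have int: "integrable M (\<lambda>y. f y * g y)"
    by (intro integrable_const_bound[where B = B]) (auto intro!: AE_I2)
  have "AE x in M. real_cond_exp M (nat_filt M I n) (\<lambda>y. f y * g y) x
      = f x * real_cond_exp M (nat_filt M I n) g x"
    by (rule real_cond_exp_mult[OF f_meas g_meas int])
  moreover have "AE x in M. (if I n x = v then 1 else 0) * real_cond_exp M (nat_filt M I n) g x
      = (if I n x = v \<and> cyc_adj l v v' then W (edge_wt X0 I n {v, v'} x)
           / (\<Sum>w\<in>{w. cyc_adj l v w}. W (edge_wt X0 I n {v, w} x)) else 0)"
    using errw unfolding is_errw_def g_def by blast
  ultimately show ?thesis
    using AE_space
  proof eventually_elim
    case (elim x)
    show ?case
    proof (cases "I n x = v")
      case True
      then show ?thesis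
        using elim(1,2) by (simp add: g_def)
    next
      case False
      then show ?thesis
        using elim(1,3) f_supp by (simp add: g_def)
    qed
  qed
qed

lemma errw_AE_cyc_adj:
  assumes errw: "is_errw M l W X0 v0 I"
  shows "AE x in M. \<forall>k. cyc_adj l (I k x) (I (Suc k) x)"
proof -
  interpret prob_space M
    using errw by (rule errw_prob_space)
  note I_meas = errw_measurable[OF errw]
  have "AE x in M. \<not> cyc_adj l v v' \<longrightarrow> \<not> (I k x = v \<and> I (Suc k) x = v')" for k v v'
  proof (cases "cyc_adj l v v'")
    case False
    interpret sigma_finite_subalgebra M "nat_filt M I k"
      by (rule sigma_finite_subalgebra_nat_filt[OF I_meas])
    define f where "f = (\<lambda>y. if I k y = v then 1 else 0 :: real)"
    define h where "h = (\<lambda>y. f y * (if I (Suc k) y = v' then 1 else 0))"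
    have f_meas: "f \<in> borel_measurable (nat_filt M I k)"
      unfolding f_def by (rule borel_measurable_nat_filt_prefix) simp
    have "(\<lambda>y. if I (Suc k) y = v' then 1 else 0 :: real) \<in> borel_measurable M"
      by (rule measurable_compose[OF I_meas]) simp
    then have "h \<in> borel_measurable M"
      using measurable_from_subalg[OF subalg f_meas] by (simp add: h_def)
    then have int: "integrable M h"
      by (intro integrable_const_bound[where B = 1]) (simp_all add: h_def f_def)
    have nonneg: "AE x in M. 0 \<le> h x"
      by (simp add: h_def f_def)
    have "AE x in M. real_cond_exp M (nat_filt M I k) h x = 0"
      using errw_cond_exp_step[OF errw f_meas, of 1 v v'] False by (simp add: h_def f_def)
    then have "AE x in M. h x = 0"
      by (rule AE_eq_0_if_real_cond_exp_eq_0[OF int nonneg])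
    then show ?thesis
      by eventually_elim (simp add: h_def f_def split: if_splits)
  qed simp
  then have "AE x in M. \<forall>k v v'. \<not> cyc_adj l v v' \<longrightarrow> \<not> (I k x = v \<and> I (Suc k) x = v')"
    unfolding AE_all_countable by blast
  then show ?thesis
    by eventually_elim blast
qed

lemma borel_measurable_weighted_crossing:
  "weighted_crossing W X0 I v v' n \<in> borel_measurable (nat_filt M I (Suc n))"
  by (rule borel_measurable_nat_filt_prefix, rule weighted_crossing_prefix_cong) blast

lemma errw_integrable_weighted_crossing:
  assumes errw: "is_errw M l W X0 v0 I" and Wpos: "\<And>k. 0 < W k"
  shows "integrable M (weighted_crossing W X0 I v v' n)"
proof -
  interpret prob_space M
    using errw by (rule errw_prob_space)
  have "weighted_crossing W X0 I v v' n \<in> borel_measurable M"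
    using subalgebra_nat_filt[where I = I, OF errw_measurable[OF errw]]
      borel_measurable_weighted_crossing
    by (rule measurable_from_subalg)
  moreover have "norm (weighted_crossing W X0 I v v' n x) \<le> Wstar W (Suc (X0 {v, v'} + n))" for x
  proof -
    have "0 \<le> weighted_crossing W X0 I v v' n x"
      by (rule weighted_crossing_nonneg[OF Wpos])
    moreover have "weighted_crossing W X0 I v v' n x \<le> Wstar W (Suc (X0 {v, v'} + n))"
      by (rule weighted_crossing_le_Wstar[OF Wpos])
    ultimately show ?thesis by simp
  qed
  ultimately show ?thesis
    by (intro integrable_const_bound[where B = "Wstar W (Suc (X0 {v, v'} + n))"] AE_I2)
qed

lemma errw_cond_exp_weighted_crossing:
  assumes errw: "is_errw M l W X0 v0 I" and Wpos: "\<And>k. 0 < W k" and adj: "cyc_adj l v v'"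
  shows "AE x in M. real_cond_exp M (nat_filt M I n) (weighted_crossing W X0 I v v' n) x
    = (if I n x = v then 1 / (\<Sum>w\<in>{w. cyc_adj l v w}. W (edge_wt X0 I n {v, w} x)) else 0)"
proof -
  define f where "f = (\<lambda>x. if I n x = v then 1 / W (edge_wt X0 I n {v, v'} x) else 0)"
  have crossing: "weighted_crossing W X0 I v v' n = (\<lambda>y. f y * (if I (Suc n) y = v' then 1 else 0))"
    by (auto simp: weighted_crossing_def f_def)
  have f_meas: "f \<in> borel_measurable (nat_filt M I n)"
  proof (rule borel_measurable_nat_filt_prefix)
    fix x y
    assume "\<And>k. k \<le> n \<Longrightarrow> I k x = I k y"
    then show "f x = f y"
      using edge_wt_prefix_cong[of n I x y X0 "{v, v'}"] by (simp add: f_def)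
  qed
  have f_bdd: "\<bar>f x\<bar> \<le> Wstar W (Suc (X0 {v, v'} + n))" for x
  proof (cases "I n x = v")
    case True
    then have "\<bar>f x\<bar> = 1 / W (edge_wt X0 I n {v, v'} x)"
      using Wpos by (simp add: f_def less_imp_le)
    also have "\<dots> \<le> Wstar W (Suc (X0 {v, v'} + n))"
      by (rule inverse_W_edge_wt_le_Wstar[OF Wpos])
    finally show ?thesis .
  next
    case False
    then show ?thesis
      using Wstar_nonneg[where W = W, OF Wpos] by (simp add: f_def)
  qed
  have W_nonzero: "W k \<noteq> 0" for k
    using Wpos[of k] by simp
  have "AE x in M. real_cond_exp M (nat_filt M I n) (weighted_crossing W X0 I v v' n) x
      = f x * (if cyc_adj l v v' then W (edge_wt X0 I n {v, v'} x)
                 / (\<Sum>w\<in>{w. cyc_adj l v w}. W (edge_wt X0 I n {v, w} x)) else 0)"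
    unfolding crossing by (rule errw_cond_exp_step[OF errw f_meas f_bdd]) (simp add: f_def)
  then show ?thesis
    by eventually_elim (simp add: f_def adj W_nonzero)
qed

lemma martingale_kappa_i:
  assumes errw: "is_errw M l W X0 v0 I" and Wpos: "\<And>k. 0 < W k" and i: "i < l"
  shows "martingale M (nat_filt M I) (kappa_i l W X0 I i)"
proof (rule martingale_of_increments)
  interpret prob_space M
    using errw by (rule errw_prob_space)
  note I_meas = errw_measurable[OF errw]
  define s where "s = Suc i mod l"
  define p where "p = (i + l - 1) mod l"
  have incr: "(\<lambda>x. kappa_i l W X0 I i (Suc n) x - kappa_i l W X0 I i n x)
      = (\<lambda>x. weighted_crossing W X0 I i s n x - weighted_crossing W X0 I i p n x)" for n
    by (simp add: kappa_i_Suc[OF i] s_def p_def)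
  have int: "integrable M (weighted_crossing W X0 I i v' n)" for v' n
    by (rule errw_integrable_weighted_crossing[OF errw Wpos])
  show sub: "sigma_finite_subalgebra M (nat_filt M I n)" for n
    by (rule sigma_finite_subalgebra_nat_filt[OF I_meas])
  show "kappa_i l W X0 I i n \<in> borel_measurable (nat_filt M I n)" for n
    by (rule borel_measurable_nat_filt_prefix, rule kappa_i_prefix_cong) blast
  have "kappa_i l W X0 I i 0 = (\<lambda>x. 0)"
    by (simp add: fun_eq_iff)
  then show "integrable M (kappa_i l W X0 I i 0)"
    by simp
  show "integrable M (\<lambda>x. kappa_i l W X0 I i (Suc n) x - kappa_i l W X0 I i n x)" for n
    unfolding incr by (intro Bochner_Integration.integrable_diff int)
  show "AE x in M. real_cond_exp M (nat_filt M I n)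
      (\<lambda>x. kappa_i l W X0 I i (Suc n) x - kappa_i l W X0 I i n x) x = 0" for n
  proof -
    interpret sigma_finite_subalgebra M "nat_filt M I n"
      by (fact sub)
    have "AE x in M. real_cond_exp M (nat_filt M I n)
        (\<lambda>x. weighted_crossing W X0 I i s n x - weighted_crossing W X0 I i p n x) x
      = real_cond_exp M (nat_filt M I n) (weighted_crossing W X0 I i s n) x
        - real_cond_exp M (nat_filt M I n) (weighted_crossing W X0 I i p n) x"
      by (rule real_cond_exp_diff[OF int int])
    moreover note
      errw_cond_exp_weighted_crossing[OF errw Wpos cyc_adj_Suc_mod[OF i], folded s_def, of n]
      errw_cond_exp_weighted_crossing[OF errw Wpos cyc_adj_pred_mod[OF i], folded p_def, of n]
    ultimately show ?thesis
      unfolding incr by eventually_elim simp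
  qed
qed

lemma martingale_kappa:
  assumes errw: "is_errw M l W X0 v0 I" and Wpos: "\<And>k. 0 < W k"
  shows "martingale M (nat_filt M I) (kappa l W X0 I)"
proof -
  interpret prob_space M
    using errw by (rule errw_prob_space)
  have kappa_eq: "kappa l W X0 I = (\<lambda>n x. (\<Sum>i\<in>{..<l}. (-1) ^ i * kappa_i l W X0 I i n x)
      + (\<Sum>i<l. (-1) ^ i * Wstar W (X0 (cyc_edge l i))))"
    by (simp add: fun_eq_iff kappa_def)
  show ?thesis
    unfolding kappa_eq
    by (rule martingale_lincomb)
      (use subalgebra_nat_filt[where I = I, OF errw_measurable[OF errw]]
        martingale_kappa_i[OF errw Wpos] in auto)
qed

lemma errw_AE_kappa_eq_alt_Wstar:
  assumes "is_errw M l W X0 v0 I" "3 \<le> l" "even l"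
  shows "AE x in M. \<forall>n. kappa l W X0 I n x = alt_Wstar l W X0 I n x"
  using errw_AE_cyc_adj[OF assms(1)]
  by eventually_elim (auto intro: kappa_eq_alt_Wstar_pathwise[OF assms(2,3)])

lemma errw_kappa_limit:
  assumes errw: "is_errw M l W X0 v0 I" and l: "3 \<le> l" "even l"
    and Wpos: "\<And>k. 0 < W k" and summable: "summable (\<lambda>k. 1 / W k)"
  shows "\<exists>kinf. kinf \<in> borel_measurable M
    \<and> (AE x in M. (\<lambda>n. kappa l W X0 I n x) \<longlonglongrightarrow> kinf x)
    \<and> (AE x in M. (\<forall>i<l. infinite {k. {I k x, I (Suc k) x} = cyc_edge l i}) \<longrightarrow> kinf x = 0)"
proof (intro exI conjI)
  have "kappa l W X0 I n \<in> borel_measurable M" for n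
    using martingale_kappa[OF errw Wpos]
      subalgebra_nat_filt[where I = I, OF errw_measurable[OF errw]]
    unfolding martingale_def by (blast intro: measurable_from_subalg)
  then show "(\<lambda>x. lim (\<lambda>n. kappa l W X0 I n x)) \<in> borel_measurable M"
    by (rule borel_measurable_lim_metric)
  show "AE x in M. (\<lambda>n. kappa l W X0 I n x) \<longlonglongrightarrow> lim (\<lambda>n. kappa l W X0 I n x)"
    using errw_AE_kappa_eq_alt_Wstar[OF errw l]
    by eventually_elim
      (simp add: convergent_alt_Wstar[OF Wpos summable] flip: convergent_LIMSEQ_iff)
  show "AE x in M. (\<forall>i<l. infinite {k. {I k x, I (Suc k) x} = cyc_edge l i})
      \<longrightarrow> lim (\<lambda>n. kappa l W X0 I n x) = 0"
    using errw_AE_kappa_eq_alt_Wstar[OF errw l]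
    by eventually_elim (simp add: alt_Wstar_LIMSEQ_0[OF summable l(2)] limI)
qed

theorem mainTheorem5:
  fixes M :: "'a measure" and l :: nat and W :: "nat \<Rightarrow> real"
    and X0 :: "nat set \<Rightarrow> nat" and v0 :: nat and I :: "nat \<Rightarrow> 'a \<Rightarrow> nat"
  assumes l3: "l \<ge> 3"
    and Wpos: "\<And>k. W k > 0"
    and v0: "v0 < l"
    and errw: "is_errw M l W X0 v0 I"
  shows "(\<forall>i<l. martingale M (nat_filt M I) (kappa_i l W X0 I i))
    \<and> (even l \<longrightarrow>
         (AE x in M. \<forall>n. kappa l W X0 I n x
                = (\<Sum>i<l. (-1) ^ i * Wstar W (edge_wt X0 I n (cyc_edge l i) x)))
       \<and> martingale M (nat_filt M I) (kappa l W X0 I)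
       \<and> (summable (\<lambda>k. 1 / W k) \<longrightarrow>
            (\<exists>kinf. kinf \<in> borel_measurable M
               \<and> (AE x in M. (\<lambda>n. kappa l W X0 I n x) \<longlonglongrightarrow> kinf x)
               \<and> (AE x in M. (\<forall>i<l. infinite {k. {I k x, I (Suc k) x} = cyc_edge l i})
                              \<longrightarrow> kinf x = 0))))"
proof -
  have kappa_eq: "AE x in M. \<forall>n. kappa l W X0 I n x
      = (\<Sum>i<l. (-1) ^ i * Wstar W (edge_wt X0 I n (cyc_edge l i) x))" if "even l"
    using errw_AE_kappa_eq_alt_Wstar[OF errw l3 that] unfolding alt_Wstar_def .
  show ?thesis
    by (intro conjI impI allI kappa_eq martingale_kappa_i[OF errw Wpos]
        martingale_kappa[OF errw Wpos] errw_kappa_limit[OF errw l3 _ Wpos])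
qed

end
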